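(* Let $1<w\le 2$, $1<h\le 2$, $n\ge 2$, and $\frac12\le y_1<\dots<y_n\le h-\frac12$; put $\Delta y_i=y_{i+1}-y_i$. Consider the linear program in variables $g,\Delta x_1,\dots,\Delta x_{n-1}$: maximize $g$ subject to $\Delta x_i+\Delta y_i\ge g$ for $i=1,\dots,n-1$, $\sum_{i=1}^{n-1}\Delta x_i\le w-1$, and $\Delta x_i\ge 0$ for $i=1,\dots,n-1$. (1) If $\mathcal A$ is a reasonable layout of this instance with gap $\gamma$, then the linear program has a feasible solution with value $g\ge\gamma$. (2) Conversely, for every feasible solution of the linear program with value $g$ and every $\delta>0$, there exists a proper staircase $\mathcal A'$ of this instance with gap at least $g-\delta$.
   Context: The instance is the strip $T=[0,w]\times[0,h]$ with the given $y_i$. A layout is a pair $(\mathbf x,\prec)$ where $\mathbf x=(x_1,\dots,x_n)$ with $x_i\in[\frac12,w-\frac12]$, and $\prec$ is a total order (stacking order) on the squares $s_1,\dots,s_n$, where $s_i$ is the closed axis-parallel unit square with centre $(x_i,y_i)$. If $s_i\prec s_j$ we say $s_j$ is in front of $s_i$ and $s_i$ is behind $s_j$. A point $p$ on the boundary of $s_i$ is visible if every square $s_j$ ($j\neq i$) containing $p$ is behind $s_i$. The visible perimeter of $s_i$ is the total length of its visible boundary points; the gap of $s_i$ is its visible perimeter minus $2$, the gap of a layout is the minimum of the gaps of its squares, and a layout is reasonable if its gap is positive. A proper staircase is a layout with $x_1<x_2<\dots<x_n$ and $s_1\prec s_2\prec\dots\prec s_n$. *)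

theory Defs
  imports "HOL-Analysis.Analysis"
begin

text \<open>Squares are indexed by i < n (0-based). A stacking order is a strict total order prec on {..<n};
  prec i j means s_i is behind s_j (s_j in front of s_i).\<close>

definition sq :: "real \<Rightarrow> real \<Rightarrow> (real \<times> real) set" where
  "sq cx cy = {p. \<bar>fst p - cx\<bar> \<le> 1/2 \<and> \<bar>snd p - cy\<bar> \<le> 1/2}"

definition strict_total_on :: "nat \<Rightarrow> (nat \<Rightarrow> nat \<Rightarrow> bool) \<Rightarrow> bool" where
  "strict_total_on n prec \<longleftrightarrow>
     (\<forall>i<n. \<not> prec i i) \<and>
     (\<forall>i<n. \<forall>j<n. \<forall>k<n. prec i j \<longrightarrow> prec j k \<longrightarrow> prec i k) \<and>
     (\<forall>i<n. \<forall>j<n. i \<noteq> j \<longrightarrow> prec i j \<or> prec j i)"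

definition is_layout :: "nat \<Rightarrow> real \<Rightarrow> (nat \<Rightarrow> real) \<Rightarrow> (nat \<Rightarrow> nat \<Rightarrow> bool) \<Rightarrow> bool" where
  "is_layout n w x prec \<longleftrightarrow> (\<forall>i<n. 1/2 \<le> x i \<and> x i \<le> w - 1/2) \<and> strict_total_on n prec"

definition side :: "nat \<Rightarrow> real \<Rightarrow> real \<Rightarrow> real \<Rightarrow> real \<times> real" where
  "side k cx cy t =
     (if k = 0 then (cx + t, cy - 1/2)
      else if k = 1 then (cx + t, cy + 1/2)
      else if k = 2 then (cx - 1/2, cy + t)
      else (cx + 1/2, cy + t))"

definition visible :: "nat \<Rightarrow> (nat \<Rightarrow> real) \<Rightarrow> (nat \<Rightarrow> real) \<Rightarrow> (nat \<Rightarrow> nat \<Rightarrow> bool)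
    \<Rightarrow> nat \<Rightarrow> real \<times> real \<Rightarrow> bool" where
  "visible n x y prec i p \<longleftrightarrow> (\<forall>j<n. j \<noteq> i \<longrightarrow> p \<in> sq (x j) (y j) \<longrightarrow> prec j i)"

text \<open>Visible perimeter: total length of the visible boundary points, computed side by side
  (corners are a null set).\<close>
definition visible_perimeter :: "nat \<Rightarrow> (nat \<Rightarrow> real) \<Rightarrow> (nat \<Rightarrow> real) \<Rightarrow> (nat \<Rightarrow> nat \<Rightarrow> bool)
    \<Rightarrow> nat \<Rightarrow> real" where
  "visible_perimeter n x y prec i =
     (\<Sum>k<4. measure lborel {t \<in> {-1/2..1/2::real}. visible n x y prec i (side k (x i) (y i) t)})"

definition sq_gap :: "nat \<Rightarrow> (nat \<Rightarrow> real) \<Rightarrow> (nat \<Rightarrow> real) \<Rightarrow> (nat \<Rightarrow> nat \<Rightarrow> bool)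
    \<Rightarrow> nat \<Rightarrow> real" where
  "sq_gap n x y prec i = visible_perimeter n x y prec i - 2"

definition layout_gap :: "nat \<Rightarrow> (nat \<Rightarrow> real) \<Rightarrow> (nat \<Rightarrow> real) \<Rightarrow> (nat \<Rightarrow> nat \<Rightarrow> bool) \<Rightarrow> real" where
  "layout_gap n x y prec = Min ((\<lambda>i. sq_gap n x y prec i) ` {..<n})"

definition reasonable :: "nat \<Rightarrow> real \<Rightarrow> (nat \<Rightarrow> real) \<Rightarrow> (nat \<Rightarrow> real) \<Rightarrow> (nat \<Rightarrow> nat \<Rightarrow> bool) \<Rightarrow> bool" where
  "reasonable n w x y prec \<longleftrightarrow> is_layout n w x prec \<and> layout_gap n x y prec > 0"

definition proper_staircase :: "nat \<Rightarrow> real \<Rightarrow> (nat \<Rightarrow> real) \<Rightarrow> (nat \<Rightarrow> nat \<Rightarrow> bool) \<Rightarrow> bool" where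
  "proper_staircase n w x prec \<longleftrightarrow> is_layout n w x prec \<and>
     (\<forall>i j. i < n \<longrightarrow> j < n \<longrightarrow> i < j \<longrightarrow> x i < x j) \<and>
     (\<forall>i j. i < n \<longrightarrow> j < n \<longrightarrow> (prec i j \<longleftrightarrow> i < j))"

definition lp_feasible :: "nat \<Rightarrow> real \<Rightarrow> (nat \<Rightarrow> real) \<Rightarrow> real \<Rightarrow> (nat \<Rightarrow> real) \<Rightarrow> bool" where
  "lp_feasible n w y g dx \<longleftrightarrow>
     (\<forall>i<n-1. dx i + (y (Suc i) - y i) \<ge> g) \<and>
     (\<Sum>i<n-1. dx i) \<le> w - 1 \<and>
     (\<forall>i<n-1. dx i \<ge> 0)"

end

(*
  Part (1): let F be the frontmost square and \<gamma> the gap. Because the instance has width and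
  height at most 2, every square covering a column (height) of a square j meets the bottom or top
  (left or right) side of j. Hence the horizontal visible length of j is at most 1 plus the length
  of the set of columns at which j is frontmost, and these sets are disjoint for different j and
  miss the columns of F, so over all j \<noteq> F they add up to at most w - 1. Likewise the vertical
  visible length of j is at most 1 plus the length of the heights at which j is frontmost. The
  heights outside the range of F split into n - 1 row gaps of lengths \<Delta>y_p, each owned by a single
  square j \<noteq> F, so every j \<noteq> F satisfies \<gamma> \<le> (its columns) + (\<Delta>y of the gaps it owns). As the
  n - 1 gaps are distributed among the n - 1 squares j \<noteq> F, the deficits \<Delta>x_p = max 0 (\<gamma> - \<Delta>y_p)
  add up to at most w - 1.

  Part (2): perturb \<Delta>x to strictly positive steps losing at most \<delta> each and stack the squares as
  a proper staircase with these horizontal steps. Square i then shows its full bottom and left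
  sides, \<Delta>x_i of its top and \<Delta>y_i of its right side, and the last square shows everything.
*)

theory Submission
  imports Defs
begin

lemma strict_mono_on_lessThanI:
  fixes f :: "nat \<Rightarrow> 'a::order"
  assumes "\<And>i. Suc i < n \<Longrightarrow> f i < f (Suc i)"
  shows "strict_mono_on {..<n} f"
proof (rule strict_mono_onI)
  fix r s assume "r \<in> {..<n}" "s \<in> {..<n}" "r < s"
  moreover have "{r..<s} \<subseteq> {..<n-1}" using \<open>s \<in> {..<n}\<close> by auto
  ultimately show "f r < f s"
    using lift_Suc_mono_less_ivl[of "{..<n-1}" f r s] assms by auto
qed

lemma fmeasurable_lborel_subset_Icc:
  fixes S :: "real set"
  assumes "S \<in> sets lborel" "S \<subseteq> {a..b}"
  shows "S \<in> fmeasurable lborel"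
  using assms by (intro fmeasurableI2[OF fmeasurable_compact[OF compact_Icc]])

lemma measure_add_le_measure_Int:
  fixes A B :: "real set"
  assumes A: "A \<in> sets lborel" and B: "B \<in> sets lborel" and sub: "A \<union> B \<subseteq> {a..b}" and "a \<le> b"
  shows "measure lborel A + measure lborel B \<le> (b - a) + measure lborel (A \<inter> B)"
proof -
  have "A \<in> fmeasurable lborel" "B \<in> fmeasurable lborel"
    using sub by (auto intro: fmeasurable_lborel_subset_Icc A B)
  then have "measure lborel (A \<union> B) = measure lborel A + measure lborel B - measure lborel (A \<inter> B)"
    by (rule measure_Un3)
  moreover have "measure lborel (A \<union> B) \<le> measure lborel {a..b}"
    using sub A B by (intro measure_mono_fmeasurable) (auto intro: fmeasurable_compact)
  ultimately show ?thesis using \<open>a \<le> b\<close> by simp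
qed

lemma measure_le_of_translate_subset:
  fixes A S :: "real set"
  assumes A: "A \<in> sets lborel" and S: "S \<in> sets lborel" "S \<subseteq> {a..b}"
    and sub: "(+) c ` A \<subseteq> S"
  shows "measure lborel A \<le> measure lborel S"
proof -
  have S_lmeasurable: "S \<in> lmeasurable"
    using S by (intro fmeasurableI2[OF lmeasurable_compact[OF compact_Icc]]) auto
  have "(+) c ` A \<in> sets lebesgue"
    using A by (intro lebesgue_sets_translation) auto
  then have "measure lebesgue ((+) c ` A) \<le> measure lebesgue S"
    by (rule measure_mono_fmeasurable[OF sub _ S_lmeasurable])
  then show ?thesis
    using A S by (simp add: measure_translation)
qed

lemma opposite_sides_measure_le:
  fixes A B S :: "real set"
  assumes "A \<in> sets lborel" "B \<in> sets lborel" "A \<union> B \<subseteq> {-1/2..1/2}"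
    and "S \<in> sets lborel" "S \<subseteq> {a..b}" "(+) c ` (A \<inter> B) \<subseteq> S"
  shows "measure lborel A + measure lborel B \<le> 1 + measure lborel S"
proof -
  have "measure lborel A + measure lborel B \<le> (1/2 - -1/2) + measure lborel (A \<inter> B)"
    using assms(1-3) by (intro measure_add_le_measure_Int) auto
  moreover have "measure lborel (A \<inter> B) \<le> measure lborel S"
    using assms by (intro measure_le_of_translate_subset) auto
  ultimately show ?thesis by simp
qed

section \<open>Frontmost elements of a stacking order\<close>

definition is_front :: "(nat \<Rightarrow> nat \<Rightarrow> bool) \<Rightarrow> nat set \<Rightarrow> nat \<Rightarrow> bool" where
  "is_front prec A j \<longleftrightarrow> j \<in> A \<and> (\<forall>k\<in>A. k \<noteq> j \<longrightarrow> prec k j)"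

definition front :: "(nat \<Rightarrow> nat \<Rightarrow> bool) \<Rightarrow> nat set \<Rightarrow> nat" where
  "front prec A = (SOME j. is_front prec A j)"

lemma strict_total_on_asym:
  assumes "strict_total_on n prec" "i < n" "j < n" "prec i j"
  shows "\<not> prec j i"
  using assms unfolding strict_total_on_def by blast

lemma strict_total_on_trans:
  assumes "strict_total_on n prec" "i < n" "j < n" "k < n" "prec i j" "prec j k"
  shows "prec i k"
  using assms unfolding strict_total_on_def by blast

lemma strict_total_on_connex:
  assumes "strict_total_on n prec" "i < n" "j < n" "i \<noteq> j" "\<not> prec i j"
  shows "prec j i"
  using assms unfolding strict_total_on_def by blast

lemma is_front_exists:
  assumes prec: "strict_total_on n prec" and "finite A" "A \<noteq> {}" "A \<subseteq> {..<n}"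
  shows "\<exists>j. is_front prec A j"
  using assms(2-4)
proof (induction A rule: finite_ne_induct)
  case (singleton a)
  then show ?case by (auto simp: is_front_def)
next
  case (insert a A)
  then obtain j where j: "is_front prec A j" by auto
  have a: "a < n" and j_lt: "j < n" and A: "A \<subseteq> {..<n}"
    using insert.prems j by (auto simp: is_front_def)
  show ?case
  proof (cases "prec j a")
    case True
    have "prec k a" if "k \<in> A" "k \<noteq> j" for k
      using that j A strict_total_on_trans[OF prec _ j_lt a _ True] by (auto simp: is_front_def)
    then have "is_front prec (insert a A) a"
      using True insert.hyps by (auto simp: is_front_def)
    then show ?thesis ..
  next
    case False
    then have "prec a j"
      using strict_total_on_connex[OF prec j_lt a] j insert.hyps by (auto simp: is_front_def)
    then have "is_front prec (insert a A) j"
      using j by (auto simp: is_front_def)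
    then show ?thesis ..
  qed
qed

lemma is_front_unique:
  assumes prec: "strict_total_on n prec" and "A \<subseteq> {..<n}" "is_front prec A j" "is_front prec A j'"
  shows "j = j'"
proof (rule ccontr)
  assume "j \<noteq> j'"
  then have "prec j' j" "prec j j'" "j < n" "j' < n"
    using assms(2-4) by (auto simp: is_front_def)
  then show False using strict_total_on_asym[OF prec] by blast
qed

lemma front_is_front:
  assumes "strict_total_on n prec" "finite A" "A \<noteq> {}" "A \<subseteq> {..<n}"
  shows "is_front prec A (front prec A)"
  unfolding front_def using is_front_exists[OF assms] by (rule someI_ex)

lemma front_eqI:
  assumes "strict_total_on n prec" "finite A" "A \<subseteq> {..<n}" "is_front prec A j"
  shows "front prec A = j"
proof -
  have "A \<noteq> {}" using assms(4) by (auto simp: is_front_def)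
  then show ?thesis
    using is_front_unique[OF assms(1,3) front_is_front[OF assms(1,2) _ assms(3)] assms(4)] by blast
qed

section \<open>Visible parts of the boundary\<close>

definition visible_part :: "nat \<Rightarrow> (nat \<Rightarrow> real) \<Rightarrow> (nat \<Rightarrow> real) \<Rightarrow> (nat \<Rightarrow> nat \<Rightarrow> bool) \<Rightarrow>
    nat \<Rightarrow> nat \<Rightarrow> real set"
  where "visible_part n x y prec i k = {t \<in> {-1/2..1/2}. visible n x y prec i (side k (x i) (y i) t)}"

lemma mem_sq_iff:
  "(u, v) \<in> sq a b \<longleftrightarrow> a - 1/2 \<le> u \<and> u \<le> a + 1/2 \<and> b - 1/2 \<le> v \<and> v \<le> b + 1/2"
  unfolding sq_def mem_Collect_eq fst_conv snd_conv abs_le_iff by auto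

lemma visible_perimeter_eq:
  "visible_perimeter n x y prec i =
     measure lborel (visible_part n x y prec i 0) + measure lborel (visible_part n x y prec i 1) +
     measure lborel (visible_part n x y prec i 2) + measure lborel (visible_part n x y prec i 3)"
  unfolding visible_perimeter_def visible_part_def by (simp add: eval_nat_numeral)

lemma visible_part_subset: "visible_part n x y prec i k \<subseteq> {-1/2..1/2}"
  by (auto simp: visible_part_def)

lemma visible_part_sets: "visible_part n x y prec i k \<in> sets lborel"
proof -
  have side: "side k (x i) (y i) \<in> borel_measurable borel"
    unfolding side_def by (cases "k = 0"; cases "k = 1"; cases "k = 2") simp_all
  have sq: "sq a b \<in> sets borel" for a b
  proof -
    have "sq a b = {a - 1/2..a + 1/2} \<times> {b - 1/2..b + 1/2}"
      by (simp add: set_eq_iff mem_sq_iff)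
    then show ?thesis by (simp add: borel_closed closed_Times)
  qed
  have "visible_part n x y prec i k = {-1/2..1/2} -
      (\<Union>j\<in>{j. j < n \<and> j \<noteq> i \<and> \<not> prec j i}. side k (x i) (y i) -` sq (x j) (y j) \<inter> space borel)"
    by (auto simp: visible_part_def visible_def)
  then show ?thesis
    using measurable_sets[OF side sq] by (auto intro!: sets.Diff sets.finite_UN)
qed

lemma visible_part_superset:
  assumes "S \<subseteq> {-1/2..1/2}"
    and "\<And>t j. t \<in> S \<Longrightarrow> j < n \<Longrightarrow> j \<noteq> i \<Longrightarrow> side k (x i) (y i) t \<in> sq (x j) (y j) \<Longrightarrow>
      prec j i"
  shows "S \<subseteq> visible_part n x y prec i k"
  using assms by (auto simp: visible_part_def visible_def)

lemma sq_gap_front: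
  assumes "is_front prec {..<n} i"
  shows "sq_gap n x y prec i = 2"
proof -
  have "visible_part n x y prec i k = {-1/2..1/2}" for k
    using assms by (intro equalityI visible_part_subset visible_part_superset) (auto simp: is_front_def)
  then show ?thesis
    by (simp add: sq_gap_def visible_perimeter_eq)
qed

lemma layout_gap_le: "i < n \<Longrightarrow> layout_gap n x y prec \<le> sq_gap n x y prec i"
  unfolding layout_gap_def by (rule Min_le) auto

lemma layout_gap_geI:
  "0 < n \<Longrightarrow> (\<And>i. i < n \<Longrightarrow> c \<le> sq_gap n x y prec i) \<Longrightarrow> c \<le> layout_gap n x y prec"
  unfolding layout_gap_def by (rule Min.boundedI) auto

definition front_part :: "nat \<Rightarrow> (nat \<Rightarrow> nat \<Rightarrow> bool) \<Rightarrow> (nat \<Rightarrow> real) \<Rightarrow> nat \<Rightarrow> real set" where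
  "front_part n prec z j =
     {z j - 1/2..z j + 1/2} - (\<Union>k\<in>{k. k < n \<and> k \<noteq> j \<and> \<not> prec k j}. {z k - 1/2..z k + 1/2})"

lemma mem_front_part:
  "a \<in> front_part n prec z j \<longleftrightarrow> z j - 1/2 \<le> a \<and> a \<le> z j + 1/2 \<and>
     (\<forall>k<n. k \<noteq> j \<longrightarrow> z k - 1/2 \<le> a \<longrightarrow> a \<le> z k + 1/2 \<longrightarrow> prec k j)"
  by (auto simp: front_part_def)

lemma front_part_sets: "front_part n prec z j \<in> sets lborel"
  unfolding front_part_def by (intro sets.Diff sets.finite_UN) auto

lemma front_part_subset: "front_part n prec z j \<subseteq> {z j - 1/2..z j + 1/2}"
  by (auto simp: front_part_def)

lemma front_parts_disjoint:
  assumes "strict_total_on n prec" "i < n" "j < n" "i \<noteq> j"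
  shows "disjnt (front_part n prec z i) (front_part n prec z j)"
  using assms strict_total_on_asym[OF assms(1-3)] by (auto simp: disjnt_def mem_front_part)

lemma front_part_front:
  assumes "is_front prec {..<n} j"
  shows "front_part n prec z j = {z j - 1/2..z j + 1/2}"
  using assms by (auto simp: front_part_def is_front_def)

lemma front_eq_if_front_part:
  assumes "strict_total_on n prec" "K \<subseteq> {..<n}" "j \<in> K" "b \<in> front_part n prec z j"
    and "\<And>k. k \<in> K \<Longrightarrow> z k - 1/2 \<le> b \<and> b \<le> z k + 1/2"
  shows "front prec K = j"
proof (rule front_eqI[OF assms(1) finite_subset[OF assms(2)] assms(2)])
  show "is_front prec K j"
    using assms(2-5) by (auto simp: is_front_def mem_front_part)
qed simp

section \<open>From a reasonable layout to the linear program\<close>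

lemma sum_deficits_le:
  fixes c :: "'a \<Rightarrow> 'b" and d :: "'a \<Rightarrow> real" and h :: "'b \<Rightarrow> real"
  assumes "finite P" "finite J" "c ` P \<subseteq> J" "card P \<le> card J" "0 \<le> \<gamma>"
    and d_nonneg: "\<And>p. p \<in> P \<Longrightarrow> 0 \<le> d p" and h_nonneg: "\<And>j. j \<in> J \<Longrightarrow> 0 \<le> h j"
    and bound: "\<And>j. j \<in> J \<Longrightarrow> \<gamma> \<le> h j + (\<Sum>p\<in>{p\<in>P. c p = j}. d p)"
  shows "(\<Sum>p\<in>P. max 0 (\<gamma> - d p)) \<le> (\<Sum>j\<in>J. h j)"
proof -
  have fibre: "(\<Sum>p\<in>{p\<in>P. c p = j}. max 0 (\<gamma> - d p) - \<gamma>) \<le> h j - \<gamma>" if j: "j \<in> J" for j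
  proof (cases "\<exists>p0\<in>{p\<in>P. c p = j}. \<gamma> \<le> d p0")
    case True
    then obtain p0 where p0: "p0 \<in> {p\<in>P. c p = j}" "\<gamma> \<le> d p0" by blast
    have "(\<Sum>p\<in>{p\<in>P. c p = j}. max 0 (\<gamma> - d p) - \<gamma>)
        = (max 0 (\<gamma> - d p0) - \<gamma>) + (\<Sum>p\<in>{p\<in>P. c p = j} - {p0}. max 0 (\<gamma> - d p) - \<gamma>)"
      using \<open>finite P\<close> p0(1) by (intro sum.remove) auto
    also have "(\<Sum>p\<in>{p\<in>P. c p = j} - {p0}. max 0 (\<gamma> - d p) - \<gamma>) \<le> 0"
      using d_nonneg \<open>0 \<le> \<gamma>\<close> by (intro sum_nonpos) auto
    finally show ?thesis using p0(2) h_nonneg[OF j] by simp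
  next
    case False
    then have "(\<Sum>p\<in>{p\<in>P. c p = j}. max 0 (\<gamma> - d p) - \<gamma>) = - (\<Sum>p\<in>{p\<in>P. c p = j}. d p)"
      by (auto simp: sum_negf[symmetric] intro!: sum.cong)
    then show ?thesis using bound[OF j] by simp
  qed
  have "(\<Sum>p\<in>P. max 0 (\<gamma> - d p) - \<gamma>) = (\<Sum>j\<in>J. \<Sum>p\<in>{p\<in>P. c p = j}. max 0 (\<gamma> - d p) - \<gamma>)"
    using assms(1-3) by (rule sum.group[symmetric])
  also have "\<dots> \<le> (\<Sum>j\<in>J. h j - \<gamma>)"
    using fibre by (rule sum_mono)
  finally have "(\<Sum>p\<in>P. max 0 (\<gamma> - d p)) \<le> (\<Sum>j\<in>J. h j) - (real (card J) - real (card P)) * \<gamma>"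
    by (simp add: sum_subtractf algebra_simps)
  moreover have "0 \<le> (real (card J) - real (card P)) * \<gamma>"
    using assms(4,5) by simp
  ultimately show ?thesis by linarith
qed

locale strip_layout =
  fixes n :: nat and w :: real and x y :: "nat \<Rightarrow> real" and prec :: "nat \<Rightarrow> nat \<Rightarrow> bool"
  assumes layout: "is_layout n w x prec"
    and width_le_2: "w \<le> 2"
    and y_mono: "strict_mono_on {..<n} y"
    and y_span: "y (n - 1) - y 0 \<le> 1"
    and n_pos: "0 < n"
begin

lemma prec_total: "strict_total_on n prec"
  using layout by (simp add: is_layout_def)

lemma x_range: "i < n \<Longrightarrow> 1/2 \<le> x i \<and> x i \<le> w - 1/2"
  using layout by (simp add: is_layout_def)

lemma x_dist: "i < n \<Longrightarrow> k < n \<Longrightarrow> x k - x i \<le> 1"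
  using x_range[of i] x_range[of k] width_le_2 by linarith

lemma y_le_iff: "i < n \<Longrightarrow> k < n \<Longrightarrow> y i \<le> y k \<longleftrightarrow> i \<le> k"
  using strict_mono_on_less_eq[OF y_mono] by simp

lemma y_dist:
  assumes "i < n" "k < n"
  shows "y k - y i \<le> 1"
proof -
  have "y 0 \<le> y i" "y k \<le> y (n - 1)"
    using assms y_le_iff by auto
  then show ?thesis using y_span by linarith
qed

definition frontmost :: nat where
  "frontmost = front prec {..<n}"

lemma frontmost_is_front: "is_front prec {..<n} frontmost"
  unfolding frontmost_def using n_pos by (intro front_is_front[OF prec_total]) auto

lemma frontmost_lt: "frontmost < n"
  using frontmost_is_front by (simp add: is_front_def)

lemma not_in_front_part_frontmost:
  assumes "j < n" "j \<noteq> frontmost" "a \<in> front_part n prec z j"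
  shows "\<not> (z frontmost - 1/2 \<le> a \<and> a \<le> z frontmost + 1/2)"
  using front_parts_disjoint[OF prec_total assms(1) frontmost_lt assms(2), of z] assms(3)
  by (auto simp: front_part_front[OF frontmost_is_front] disjnt_def)

lemma horizontal_sides_le:
  assumes j: "j < n"
  shows "measure lborel (visible_part n x y prec j 0) + measure lborel (visible_part n x y prec j 1)
     \<le> 1 + measure lborel (front_part n prec x j)"
proof (rule opposite_sides_measure_le[OF visible_part_sets visible_part_sets _ front_part_sets front_part_subset])
  show "(+) (x j) ` (visible_part n x y prec j 0 \<inter> visible_part n x y prec j 1) \<subseteq> front_part n prec x j"
  proof (rule image_subsetI)
    fix t assume t: "t \<in> visible_part n x y prec j 0 \<inter> visible_part n x y prec j 1"
    show "x j + t \<in> front_part n prec x j"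
      unfolding mem_front_part
    proof (intro conjI allI impI)
      show "x j - 1/2 \<le> x j + t" "x j + t \<le> x j + 1/2"
        using t by (auto simp: visible_part_def)
      fix k assume k: "k < n" "k \<noteq> j" "x k - 1/2 \<le> x j + t" "x j + t \<le> x k + 1/2"
      have "side 0 (x j) (y j) t \<in> sq (x k) (y k) \<or> side 1 (x j) (y j) t \<in> sq (x k) (y k)"
        using k y_dist[OF j k(1)] y_dist[OF k(1) j] by (auto simp: side_def mem_sq_iff)
      then show "prec k j"
        using t k by (auto simp: visible_part_def visible_def)
    qed
  qed
qed (auto simp: visible_part_def)

lemma vertical_sides_le:
  assumes j: "j < n"
  shows "measure lborel (visible_part n x y prec j 2) + measure lborel (visible_part n x y prec j 3)
     \<le> 1 + measure lborel (front_part n prec y j)"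
proof (rule opposite_sides_measure_le[OF visible_part_sets visible_part_sets _ front_part_sets front_part_subset])
  show "(+) (y j) ` (visible_part n x y prec j 2 \<inter> visible_part n x y prec j 3) \<subseteq> front_part n prec y j"
  proof (rule image_subsetI)
    fix t assume t: "t \<in> visible_part n x y prec j 2 \<inter> visible_part n x y prec j 3"
    show "y j + t \<in> front_part n prec y j"
      unfolding mem_front_part
    proof (intro conjI allI impI)
      show "y j - 1/2 \<le> y j + t" "y j + t \<le> y j + 1/2"
        using t by (auto simp: visible_part_def)
      fix k assume k: "k < n" "k \<noteq> j" "y k - 1/2 \<le> y j + t" "y j + t \<le> y k + 1/2"
      have "side 2 (x j) (y j) t \<in> sq (x k) (y k) \<or> side 3 (x j) (y j) t \<in> sq (x k) (y k)"
        using k x_dist[OF j k(1)] x_dist[OF k(1) j] by (auto simp: side_def mem_sq_iff)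
      then show "prec k j"
        using t k by (auto simp: visible_part_def visible_def)
    qed
  qed
qed (auto simp: visible_part_def)

lemma front_columns_sum_le:
  "(\<Sum>j\<in>{..<n} - {frontmost}. measure lborel (front_part n prec x j)) \<le> w - 1"
proof -
  let ?J = "{..<n} - {frontmost}" and ?F = frontmost
  have xF: "1/2 \<le> x ?F" "x ?F \<le> w - 1/2"
    using x_range[OF frontmost_lt] by auto
  have fmeasurable: "front_part n prec x j \<in> fmeasurable lborel" for j
    by (rule fmeasurable_lborel_subset_Icc[OF front_part_sets front_part_subset])
  have "(\<Sum>j\<in>?J. measure lborel (front_part n prec x j)) = measure lborel (\<Union>j\<in>?J. front_part n prec x j)"
    using front_parts_disjoint[OF prec_total] fmeasurable
    by (intro measure_UNION'[symmetric]) (auto simp: pairwise_def)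
  also have "\<dots> \<le> measure lborel ({0..<x ?F - 1/2} \<union> {x ?F + 1/2<..w})"
  proof (rule measure_mono_fmeasurable)
    show "(\<Union>j\<in>?J. front_part n prec x j) \<subseteq> {0..<x ?F - 1/2} \<union> {x ?F + 1/2<..w}"
    proof
      fix a assume "a \<in> (\<Union>j\<in>?J. front_part n prec x j)"
      then obtain j where j: "j < n" "j \<noteq> ?F" and a: "a \<in> front_part n prec x j" by blast
      show "a \<in> {0..<x ?F - 1/2} \<union> {x ?F + 1/2<..w}"
        using not_in_front_part_frontmost[OF j a] front_part_subset[of n prec x j] a x_range[OF j(1)]
        by fastforce
    qed
    show "{0..<x ?F - 1/2} \<union> {x ?F + 1/2<..w} \<in> fmeasurable lborel"
      using xF by (intro fmeasurable_lborel_subset_Icc[of _ 0 w]) auto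
  qed (use front_part_sets in auto)
  also have "\<dots> \<le> measure lborel {0..<x ?F - 1/2} + measure lborel {x ?F + 1/2<..w}"
    by (rule measure_Un_le) auto
  also have "\<dots> = w - 1"
    using xF by simp
  finally show ?thesis .
qed

text \<open>Below the frontmost square the row gap p is met exactly by the squares in {..p}, above it
  exactly by those in {Suc p..<n}; so only the frontmost of these, its owner, can be frontmost there.\<close>

definition gap_owner :: "nat \<Rightarrow> nat" where
  "gap_owner p = (if p < frontmost then front prec {..p} else front prec {Suc p..<n})"

definition row_gap :: "nat \<Rightarrow> real set" where
  "row_gap p = (if p < frontmost then {y p - 1/2..<y (Suc p) - 1/2} else {y p + 1/2<..y (Suc p) + 1/2})"

lemma gap_owner_mem:
  assumes "p < n - 1"
  shows "gap_owner p \<in> {..<n} - {frontmost}"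
proof (cases "p < frontmost")
  case True
  have "is_front prec {..p} (front prec {..p})"
    using assms by (intro front_is_front[OF prec_total]) auto
  then show ?thesis using True assms by (auto simp: gap_owner_def is_front_def)
next
  case False
  have "is_front prec {Suc p..<n} (front prec {Suc p..<n})"
    using assms by (intro front_is_front[OF prec_total]) auto
  then show ?thesis using False by (auto simp: gap_owner_def is_front_def)
qed

lemma measure_row_gap: "p < n - 1 \<Longrightarrow> measure lborel (row_gap p) = y (Suc p) - y p"
  using y_le_iff[of p "Suc p"] by (simp add: row_gap_def)

lemma row_gap_sets: "row_gap p \<in> sets lborel"
  by (simp add: row_gap_def)

lemma row_gap_subset:
  assumes "p < n - 1"
  shows "row_gap p \<subseteq> {y 0 - 1/2..y (n - 1) + 1/2}"
proof -
  have "y 0 \<le> y p" "y (Suc p) \<le> y (n - 1)"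
    using assms y_le_iff by auto
  then show ?thesis
    using y_le_iff[of p "Suc p"] assms by (auto simp: row_gap_def)
qed

lemma front_row_below_frontmost:
  assumes j: "j < n" and b: "b \<in> front_part n prec y j" "b < y frontmost - 1/2"
  shows "\<exists>p<n-1. gap_owner p = j \<and> b \<in> row_gap p"
proof -
  define S where "S = {k. k < n \<and> y k - 1/2 \<le> b}"
  define q where "q = Max S"
  have S: "finite S" "j \<in> S"
    using j b(1) by (auto simp: S_def mem_front_part)
  then have "q \<in> S" and j_q: "j \<le> q"
    unfolding q_def using Max_in by auto
  then have q: "q < n" "y q - 1/2 \<le> b"
    by (auto simp: S_def)
  have q_F: "q < frontmost"
    using q b(2) y_le_iff[OF frontmost_lt q(1)] by linarith
  then have q_n: "Suc q < n" using frontmost_lt by simp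
  have b_q: "b < y (Suc q) - 1/2"
    using Max_ge[OF S(1), of "Suc q"] q_n unfolding q_def S_def by fastforce
  have "front prec {..q} = j"
  proof (rule front_eq_if_front_part[OF prec_total _ _ b(1)])
    fix k assume "k \<in> {..q}"
    then show "y k - 1/2 \<le> b \<and> b \<le> y k + 1/2"
      using q y_le_iff[of k q] y_dist[of k "Suc q"] q_n b_q by auto
  qed (use q j_q in auto)
  then show ?thesis
    using q_F q_n q(2) b_q by (intro exI[of _ q]) (auto simp: gap_owner_def row_gap_def)
qed

lemma front_row_above_frontmost:
  assumes j: "j < n" and b: "b \<in> front_part n prec y j" "y frontmost + 1/2 < b"
  shows "\<exists>p<n-1. gap_owner p = j \<and> b \<in> row_gap p"
proof -
  define S where "S = {k. k < n \<and> b \<le> y k + 1/2}"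
  define q where "q = Min S"
  have S: "finite S" "j \<in> S"
    using j b(1) by (auto simp: S_def mem_front_part)
  then have "q \<in> S" and q_j: "q \<le> j"
    unfolding q_def using Min_in by auto
  then have q: "q < n" "b \<le> y q + 1/2"
    by (auto simp: S_def)
  have F_q: "frontmost < q"
    using q b(2) y_le_iff[OF q(1) frontmost_lt] by linarith
  define p where "p = q - 1"
  have p: "Suc p = q" "\<not> p < frontmost" using F_q by (auto simp: p_def)
  have b_p: "y p + 1/2 < b"
    using Min_le[OF S(1), of p] p q(1) unfolding q_def S_def by fastforce
  have "front prec {Suc p..<n} = j"
  proof (rule front_eq_if_front_part[OF prec_total _ _ b(1)])
    fix k assume "k \<in> {Suc p..<n}"
    then show "y k - 1/2 \<le> b \<and> b \<le> y k + 1/2"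
      using q p y_le_iff[of q k] y_dist[of p k] b_p by auto
  qed (use p q q_j j in auto)
  then show ?thesis
    using p q b_p by (intro exI[of _ p]) (auto simp: gap_owner_def row_gap_def)
qed

lemma front_rows_measure_le:
  assumes j: "j < n" "j \<noteq> frontmost"
  shows "measure lborel (front_part n prec y j) \<le> (\<Sum>p\<in>{p\<in>{..<n-1}. gap_owner p = j}. y (Suc p) - y p)"
proof -
  let ?P = "{p\<in>{..<n-1}. gap_owner p = j}"
  have "front_part n prec y j \<subseteq> (\<Union>p\<in>?P. row_gap p)"
  proof
    fix b assume b: "b \<in> front_part n prec y j"
    then have "b < y frontmost - 1/2 \<or> y frontmost + 1/2 < b"
      using not_in_front_part_frontmost[OF j b] by linarith
    then show "b \<in> (\<Union>p\<in>?P. row_gap p)"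
      using front_row_below_frontmost[OF j(1) b] front_row_above_frontmost[OF j(1) b] by auto
  qed
  then have "measure lborel (front_part n prec y j) \<le> measure lborel (\<Union>p\<in>?P. row_gap p)"
  proof (rule measure_mono_fmeasurable[OF _ front_part_sets])
    show "(\<Union>p\<in>?P. row_gap p) \<in> fmeasurable lborel"
      using row_gap_subset row_gap_sets
      by (intro fmeasurable_lborel_subset_Icc[of _ "y 0 - 1/2" "y (n - 1) + 1/2"])
        (auto intro!: sets.finite_UN)
  qed
  also have "\<dots> \<le> (\<Sum>p\<in>?P. measure lborel (row_gap p))"
    by (rule measure_UNION_le) (use row_gap_sets in auto)
  also have "\<dots> = (\<Sum>p\<in>?P. y (Suc p) - y p)"
    by (rule sum.cong) (auto simp: measure_row_gap)
  finally show ?thesis .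
qed

theorem lp_feasible_if_reasonable:
  assumes "reasonable n w x y prec"
  shows "\<exists>g dx. lp_feasible n w y g dx \<and> layout_gap n x y prec \<le> g"
proof -
  define \<gamma> where "\<gamma> = layout_gap n x y prec"
  define dy where "dy p = y (Suc p) - y p" for p
  let ?J = "{..<n} - {frontmost}" and ?P = "{..<n - 1}"
  have square_bound:
    "\<gamma> \<le> measure lborel (front_part n prec x j) + (\<Sum>p\<in>{p\<in>?P. gap_owner p = j}. dy p)"
    if "j \<in> ?J" for j
    using that layout_gap_le[of j n x y prec] horizontal_sides_le[of j] vertical_sides_le[of j]
      front_rows_measure_le[of j]
    by (simp add: \<gamma>_def dy_def sq_gap_def visible_perimeter_eq)
  have "(\<Sum>p\<in>?P. max 0 (\<gamma> - dy p)) \<le> (\<Sum>j\<in>?J. measure lborel (front_part n prec x j))"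
  proof (rule sum_deficits_le[OF _ _ _ _ _ _ _ square_bound])
    show "gap_owner ` ?P \<subseteq> ?J" using gap_owner_mem by auto
    show "card ?P \<le> card ?J" using frontmost_lt by simp
    show "0 \<le> \<gamma>" using assms by (simp add: \<gamma>_def reasonable_def)
    show "0 \<le> dy p" if "p \<in> ?P" for p
      using that y_le_iff[of p "Suc p"] by (simp add: dy_def)
  qed auto
  also have "\<dots> \<le> w - 1"
    by (rule front_columns_sum_le)
  finally have "lp_feasible n w y \<gamma> (\<lambda>p. max 0 (\<gamma> - dy p))"
    by (auto simp: lp_feasible_def dy_def)
  then show ?thesis
    unfolding \<gamma>_def by blast
qed

end

section \<open>From the linear program to a staircase\<close>

lemma measure_le_visible_part:
  "S \<in> sets lborel \<Longrightarrow> S \<subseteq> visible_part n x y prec i k \<Longrightarrow>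
    measure lborel S \<le> measure lborel (visible_part n x y prec i k)"
  by (rule measure_mono_fmeasurable)
    (auto intro: fmeasurable_lborel_subset_Icc[OF visible_part_sets visible_part_subset])

lemma staircase_sq_gap:
  fixes x y :: "nat \<Rightarrow> real"
  assumes x: "strict_mono_on {..<n} x" and y: "strict_mono_on {..<n} y" and j: "Suc j < n"
    and dx: "x (Suc j) - x j \<le> 1" and dy: "y (Suc j) - y j \<le> 1"
  shows "x (Suc j) - x j + (y (Suc j) - y j) \<le> sq_gap n x y (<) j"
proof -
  let ?vis = "visible_part n x y (<) j"
  have step: "x j < x (Suc j)" "y j < y (Suc j)"
    using j strict_mono_onD[OF x, of j "Suc j"] strict_mono_onD[OF y, of j "Suc j"] by auto
  have vis: "S \<subseteq> ?vis k"
    if "S \<subseteq> {-1/2..1/2}"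
      and "\<And>t l. t \<in> S \<Longrightarrow> x (Suc j) \<le> x l \<Longrightarrow> y (Suc j) \<le> y l \<Longrightarrow>
        side k (x j) (y j) t \<notin> sq (x l) (y l)"
    for S k
  proof (rule visible_part_superset[OF that(1)])
    fix t l assume "t \<in> S" "l < n" "l \<noteq> j" and sq: "side k (x j) (y j) t \<in> sq (x l) (y l)"
    show "l < j"
    proof (rule ccontr)
      assume "\<not> l < j"
      then have "x (Suc j) \<le> x l" "y (Suc j) \<le> y l"
        using \<open>l < n\<close> \<open>l \<noteq> j\<close> j strict_mono_on_leD[OF x] strict_mono_on_leD[OF y] by auto
      then show False using that(2)[OF \<open>t \<in> S\<close>] sq by blast
    qed
  qed
  have "1 \<le> measure lborel (?vis 0)" "1 \<le> measure lborel (?vis 2)"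
    using step measure_le_visible_part[OF _ vis[of "{-1/2..1/2}" 0]]
      measure_le_visible_part[OF _ vis[of "{-1/2..1/2}" 2]]
    by (auto simp: side_def mem_sq_iff)
  moreover have "x (Suc j) - x j \<le> measure lborel (?vis 1)"
  proof -
    have "{-1/2..<x (Suc j) - x j - 1/2} \<subseteq> {-1/2..1/2}"
      using dx by auto
    then show ?thesis
      using step measure_le_visible_part[OF _ vis[of "{-1/2..<x (Suc j) - x j - 1/2}" 1]]
      by (auto simp: side_def mem_sq_iff)
  qed
  moreover have "y (Suc j) - y j \<le> measure lborel (?vis 3)"
  proof -
    have "{-1/2..<y (Suc j) - y j - 1/2} \<subseteq> {-1/2..1/2}"
      using dy by auto
    then show ?thesis
      using step measure_le_visible_part[OF _ vis[of "{-1/2..<y (Suc j) - y j - 1/2}" 3]]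
      by (auto simp: side_def mem_sq_iff)
  qed
  ultimately show ?thesis
    by (simp add: sq_gap_def visible_perimeter_eq)
qed

lemma positive_steps_close_to:
  fixes dx :: "nat \<Rightarrow> real"
  assumes "0 < m" "0 < L" "0 < \<delta>" "\<And>i. i < m \<Longrightarrow> 0 \<le> dx i" "(\<Sum>i<m. dx i) \<le> L"
  shows "\<exists>d. (\<forall>i<m. 0 < d i \<and> dx i - \<delta> \<le> d i) \<and> (\<Sum>i<m. d i) \<le> L"
proof -
  define \<tau> where "\<tau> = min 1 (\<delta> / L)"
  define d where "d i = (1 - \<tau>) * dx i + \<tau> * (L / m)" for i
  have \<tau>: "0 < \<tau>" "\<tau> \<le> 1" "\<tau> * L \<le> \<delta>"
    using assms(2,3) by (auto simp: \<tau>_def min_def field_simps)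
  have "0 < d i \<and> dx i - \<delta> \<le> d i" if i: "i < m" for i
  proof -
    have "dx i \<le> L"
      using member_le_sum[of i "{..<m}" dx] assms(4,5) i by auto
    then have "\<tau> * dx i \<le> \<delta>"
      using \<tau> mult_left_mono[of "dx i" L \<tau>] by linarith
    moreover have "0 \<le> (1 - \<tau>) * dx i" "0 < \<tau> * (L / m)"
      using \<tau> assms(1,2) assms(4)[OF i] by auto
    ultimately show ?thesis
      by (auto simp: d_def algebra_simps)
  qed
  moreover have "(\<Sum>i<m. d i) = (1 - \<tau>) * (\<Sum>i<m. dx i) + \<tau> * L"
    using assms(1) by (simp add: d_def sum.distrib sum_distrib_left)
  then have "(\<Sum>i<m. d i) \<le> L"
    using assms(5) \<tau> mult_left_mono[of "\<Sum>i<m. dx i" L "1 - \<tau>"] by (simp add: algebra_simps)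
  ultimately show ?thesis by blast
qed

lemma staircase_if_lp_feasible:
  assumes w: "1 < w" "w \<le> 2" and n: "2 \<le> n" and y: "strict_mono_on {..<n} y"
    and y_span: "y (n - 1) - y 0 \<le> 1" and feasible: "lp_feasible n w y g dx" and "0 < \<delta>"
  shows "\<exists>x prec. proper_staircase n w x prec \<and> g - \<delta> \<le> layout_gap n x y prec"
proof -
  have dx: "\<And>i. i < n - 1 \<Longrightarrow> g \<le> dx i + (y (Suc i) - y i)" "(\<Sum>i<n - 1. dx i) \<le> w - 1"
    "\<And>i. i < n - 1 \<Longrightarrow> 0 \<le> dx i"
    using feasible by (auto simp: lp_feasible_def)
  obtain d where d_pos: "\<And>i. i < n - 1 \<Longrightarrow> 0 < d i"
    and d_close: "\<And>i. i < n - 1 \<Longrightarrow> dx i - \<delta> \<le> d i"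
    and d_sum: "(\<Sum>i<n - 1. d i) \<le> w - 1"
    using positive_steps_close_to[of "n - 1" "w - 1" \<delta> dx] n w dx(2,3) \<open>0 < \<delta>\<close> by auto
  have d_nonneg: "\<And>i. i < n - 1 \<Longrightarrow> 0 \<le> d i"
    using d_pos less_imp_le by blast
  define x where "x i = 1/2 + (\<Sum>p<i. d p)" for i
  have x_step: "x (Suc i) - x i = d i" for i
    by (simp add: x_def)
  have x_mono: "strict_mono_on {..<n} x"
  proof (rule strict_mono_on_lessThanI)
    fix i assume "Suc i < n"
    then show "x i < x (Suc i)"
      using d_pos[of i] x_step[of i] by linarith
  qed
  have x_step_le: "x (Suc i) - x i \<le> 1" if "Suc i < n" for i
  proof -
    have "d i \<le> (\<Sum>p<n - 1. d p)"
      using that d_nonneg by (intro member_le_sum) auto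
    then show ?thesis
      using x_step[of i] d_sum w by linarith
  qed
  have "1/2 \<le> x i \<and> x i \<le> w - 1/2" if "i < n" for i
  proof -
    have "0 \<le> (\<Sum>p<i. d p)" "(\<Sum>p<i. d p) \<le> (\<Sum>p<n - 1. d p)"
      using that d_nonneg by (auto intro!: sum_nonneg sum_mono2)
    then show ?thesis
      using d_sum by (simp add: x_def)
  qed
  then have "is_layout n w x (<)"
    by (auto simp: is_layout_def strict_total_on_def)
  then have staircase: "proper_staircase n w x (<)"
    using strict_mono_onD[OF x_mono] by (auto simp: proper_staircase_def)
  have y_step_le: "y (Suc i) - y i \<le> 1" if "Suc i < n" for i
  proof -
    have "y 0 \<le> y i" "y (Suc i) \<le> y (n - 1)"
      using that by (auto intro!: strict_mono_on_leD[OF y])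
    then show ?thesis
      using y_span by linarith
  qed
  have "g - \<delta> \<le> sq_gap n x y (<) j" if j: "j < n" for j
  proof (cases "Suc j < n")
    case True
    then have "j < n - 1" by simp
    then show ?thesis
      using staircase_sq_gap[OF x_mono y True x_step_le[OF True] y_step_le[OF True]] dx(1)[of j] d_close[of j] x_step[of j]
      by simp
  next
    case False
    then have "is_front (<) {..<n} j" using j by (auto simp: is_front_def)
    moreover have "dx 0 \<le> w - 1"
      using member_le_sum[of 0 "{..<n - 1}" dx] dx n by auto
    ultimately show ?thesis
      using sq_gap_front dx(1)[of 0] y_step_le[of 0] n w \<open>0 < \<delta>\<close> by fastforce
  qed
  then have "g - \<delta> \<le> layout_gap n x y (<)"
    using n by (intro layout_gap_geI) auto
  with staircase show ?thesis by blast
qed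

theorem lemma6:
  fixes w h :: real and n :: nat and y :: "nat \<Rightarrow> real"
  assumes "1 < w" "w \<le> 2" "1 < h" "h \<le> 2" "n \<ge> 2"
    and "1/2 \<le> y 0" "y (n - 1) \<le> h - 1/2"
    and "\<forall>i. Suc i < n \<longrightarrow> y i < y (Suc i)"
  shows "(\<forall>x prec. reasonable n w x y prec \<longrightarrow>
            (\<exists>g dx. lp_feasible n w y g dx \<and> g \<ge> layout_gap n x y prec))
       \<and> (\<forall>g dx \<delta>. lp_feasible n w y g dx \<longrightarrow> \<delta> > 0 \<longrightarrow>
            (\<exists>x prec. proper_staircase n w x prec \<and> layout_gap n x y prec \<ge> g - \<delta>))"
proof -
  have y_mono: "strict_mono_on {..<n} y"
    using assms(8) by (intro strict_mono_on_lessThanI) auto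
  have y_span: "y (n - 1) - y 0 \<le> 1"
    using assms(4,6,7) by linarith
  show ?thesis
  proof (intro conjI allI impI)
    fix x prec assume reasonable: "reasonable n w x y prec"
    then interpret strip_layout n w x y prec
      using assms(2,5) y_mono y_span by unfold_locales (auto simp: reasonable_def)
    show "\<exists>g dx. lp_feasible n w y g dx \<and> g \<ge> layout_gap n x y prec"
      using lp_feasible_if_reasonable[OF reasonable] .
  next
    fix g \<delta> :: real and dx :: "nat \<Rightarrow> real"
    assume "lp_feasible n w y g dx" "\<delta> > 0"
    then show "\<exists>x prec. proper_staircase n w x prec \<and> layout_gap n x y prec \<ge> g - \<delta>"
      using staircase_if_lp_feasible assms(1,2,5) y_mono y_span by blast
  qed
qed

end
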